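(* Let $E$ be a non-empty cohesive almost zero-dimensional space, and let $Y$ be a completely metrizable separable space containing $E$ as a subspace. Then there is a completely metrizable cohesive almost zero-dimensional space $E'$ with $E\subset E'\subset Y$.
   Context: All spaces are separable and metrizable. A subset $A$ of a space $X$ is a C-set in $X$ if $A$ is an intersection of clopen subsets of $X$. A space $X$ is almost zero-dimensional if every point of $X$ has a neighborhood basis consisting of C-sets in $X$. A space $X$ is cohesive if every point $x\in X$ has a neighborhood which contains no non-empty clopen subset of $X$. *)

theory Defs
  imports "HOL-Analysis.Analysis"
begin

definition C_set :: "'a topology \<Rightarrow> 'a set \<Rightarrow> bool" where
  "C_set X A \<longleftrightarrow> (\<exists>\<U>. (\<forall>U\<in>\<U>. closedin X U \<and> openin X U) \<and> A = topspace X \<inter> \<Inter>\<U>)"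

definition almost_zero_dimensional :: "'a topology \<Rightarrow> bool" where
  "almost_zero_dimensional X \<longleftrightarrow>
     (\<forall>x U. openin X U \<and> x \<in> U \<longrightarrow>
        (\<exists>A V. C_set X A \<and> openin X V \<and> x \<in> V \<and> V \<subseteq> A \<and> A \<subseteq> U))"

definition cohesive :: "'a topology \<Rightarrow> bool" where
  "cohesive X \<longleftrightarrow>
     (\<forall>x\<in>topspace X. \<exists>N V. openin X V \<and> x \<in> V \<and> V \<subseteq> N \<and> N \<subseteq> topspace X \<and>
        (\<forall>C. closedin X C \<and> openin X C \<and> C \<noteq> {} \<longrightarrow> \<not> C \<subseteq> N))"

end

theory Submission
  imports Defs
begin

text \<open>Both properties of E are witnessed by open subsets of Y. Cohesion: let U be the union of
the open sets whose trace on E contains no non-empty clopen subset of E; for E \<subseteq> E' \<subseteq> U \<inter> cl E,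
a non-empty clopen subset of E' meets the dense subspace E in a non-empty clopen subset of E, so
E' is cohesive. Almost zero-dimensionality: with a countable base of Y, countably many C-sets of E
suffice, each an intersection of countably many clopen sets, and each clopen set is cut out of E
by a pair of disjoint-on-E open sets of Y. Requiring that these pairs still split E' and that the
C-sets they cut out still sit inside the closures of the corresponding basic sets is a countable
family of G-delta conditions. Intersecting them with U and cl E gives a G-delta, hence completely
metrizable, subspace of Y.\<close>

lemma (in Metric_space) separable_imp_second_countable:
  assumes "separable_space mtopology"
  shows "second_countable mtopology"
proof -
  obtain C where C: "countable C" "C \<subseteq> M" "mtopology closure_of C = M"
    using assms by (auto simp: separable_space_def)
  define \<B> where "\<B> = (\<lambda>(c, n). mball c (1 / Suc n)) ` (C \<times> (UNIV :: nat set))"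
  have "\<exists>V\<in>\<B>. x \<in> V \<and> V \<subseteq> U" if U: "openin mtopology U" and "x \<in> U" for U x
  proof -
    obtain r where "r > 0" and r: "mball x r \<subseteq> U" and x: "x \<in> M"
      using U \<open>x \<in> U\<close> openin_mtopology by (metis subsetD)
    obtain n where n: "1 / Suc n < r / 2"
      using \<open>r > 0\<close> by (metis half_gt_zero inverse_eq_divide reals_Archimedean)
    have "\<forall>\<epsilon>>0. \<exists>c\<in>C. c \<in> mball x \<epsilon>"
      using C(3) x unfolding metric_closure_of by blast
    moreover have "(1::real) / Suc n > 0"
      by simp
    ultimately obtain c where c: "c \<in> C" "c \<in> mball x (1 / Suc n)"
      by blast
    have "mball c (1 / Suc n) \<subseteq> mball x r"
    proof
      fix y assume y: "y \<in> mball c (1 / Suc n)"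
      have "d x y \<le> d x c + d c y"
        using c y x by (intro triangle) auto
      moreover have "d x c < 1 / Suc n" "d c y < 1 / Suc n"
        using c y by auto
      ultimately show "y \<in> mball x r"
        using n x y by simp
    qed
    moreover have "x \<in> mball c (1 / Suc n)"
      using c x by (simp add: commute)
    moreover have "mball c (1 / Suc n) \<in> \<B>"
      unfolding \<B>_def using c by force
    ultimately show ?thesis
      using r by blast
  qed
  moreover have "countable \<B>"
    using C(1) unfolding \<B>_def by (intro countable_image countable_SIGMA) auto
  ultimately show ?thesis
    unfolding second_countable_def \<B>_def by force
qed

lemma separable_metrizable_imp_second_countable:
  assumes "metrizable_space X" "separable_space X"
  shows "second_countable X"
  using assms Metric_space.separable_imp_second_countable unfolding metrizable_space_def by metis

lemma second_countable_countable_subcollection: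
  assumes "second_countable X" "\<And>V. V \<in> \<V> \<Longrightarrow> openin X V"
  obtains \<W> where "countable \<W>" "\<W> \<subseteq> \<V>" "\<Union>\<W> = \<Union>\<V>"
proof -
  have "Lindelof_space (subtopology X (\<Union>\<V>))"
    using assms(1) by (simp add: second_countable_imp_Lindelof_space second_countable_subtopology)
  moreover have "openin (subtopology X (\<Union>\<V>)) V" if "V \<in> \<V>" for V
    using assms(2) that openin_subtopology_Int2[of X V "\<Union>\<V>"] by (metis Int_absorb1 Union_upper)
  moreover have "topspace (subtopology X (\<Union>\<V>)) = \<Union>\<V>"
    using assms(2) openin_subset by fastforce
  ultimately show ?thesis
    using that unfolding Lindelof_space_def by metis
qed

lemma C_set_countable_Inter:
  assumes "second_countable X" "C_set X A"
  obtains \<U> where "countable \<U>" "\<And>U. U \<in> \<U> \<Longrightarrow> closedin X U \<and> openin X U"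
    "A = topspace X \<inter> \<Inter>\<U>"
proof -
  obtain \<U>\<^sub>0 where clopen: "\<And>U. U \<in> \<U>\<^sub>0 \<Longrightarrow> closedin X U \<and> openin X U"
    and A: "A = topspace X \<inter> \<Inter>\<U>\<^sub>0"
    using assms(2) unfolding C_set_def by blast
  have "openin X V" if "V \<in> (\<lambda>U. topspace X - U) ` \<U>\<^sub>0" for V
    using that clopen by blast
  then obtain \<W> where \<W>: "countable \<W>" "\<W> \<subseteq> (\<lambda>U. topspace X - U) ` \<U>\<^sub>0"
    "\<Union>\<W> = \<Union>((\<lambda>U. topspace X - U) ` \<U>\<^sub>0)"
    by (rule second_countable_countable_subcollection[OF assms(1)])
  then obtain \<U> where \<U>: "countable \<U>" "\<U> \<subseteq> \<U>\<^sub>0" "\<W> = (\<lambda>U. topspace X - U) ` \<U>"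
    using countable_subset_image by metis
  have "A = topspace X \<inter> \<Inter>\<U>"
    using \<W>(3) unfolding A \<U>(3) by blast
  with \<U> clopen that show ?thesis
    by blast
qed

lemma clopen_in_dense_subtopology:
  assumes "E \<subseteq> S" "S \<subseteq> Y closure_of E"
    and "closedin (subtopology Y S) C" "openin (subtopology Y S) C" "C \<noteq> {}"
  shows "closedin (subtopology Y E) (C \<inter> E)" "openin (subtopology Y E) (C \<inter> E)" "C \<inter> E \<noteq> {}"
proof -
  have restrict: "subtopology (subtopology Y S) E = subtopology Y E"
    using assms(1) by (simp add: subtopology_subtopology Int_absorb1)
  show "closedin (subtopology Y E) (C \<inter> E)"
    using closedin_subtopology_Int_closed[OF assms(3), of E] restrict by (simp add: Int_commute)
  show "openin (subtopology Y E) (C \<inter> E)"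
    using openin_subtopology_Int2[OF assms(4), of E] restrict by (simp add: Int_commute)
  obtain T where T: "openin Y T" "C = T \<inter> S"
    using assms(4) unfolding openin_subtopology by blast
  obtain p where "p \<in> C"
    using assms(5) by blast
  then have "p \<in> Y closure_of E" "p \<in> T"
    using T(2) assms(2) by auto
  then obtain z where "z \<in> E" "z \<in> T"
    using T(1) unfolding in_closure_of by blast
  with T(2) assms(1) show "C \<inter> E \<noteq> {}"
    by blast
qed

lemma cohesive_subtopology_if_dense:
  assumes E': "E \<subseteq> E'" "E' \<subseteq> Y closure_of E"
    and local: "\<And>x. x \<in> E' \<Longrightarrow> \<exists>W. openin Y W \<and> x \<in> W \<and>
      (\<forall>C. closedin (subtopology Y E) C \<and> openin (subtopology Y E) C \<and> C \<noteq> {} \<longrightarrow> \<not> C \<subseteq> W)"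
  shows "cohesive (subtopology Y E')"
  unfolding cohesive_def
proof
  fix x assume "x \<in> topspace (subtopology Y E')"
  then obtain W where W: "openin Y W" "x \<in> W" and no_clopen:
    "\<forall>C. closedin (subtopology Y E) C \<and> openin (subtopology Y E) C \<and> C \<noteq> {} \<longrightarrow> \<not> C \<subseteq> W"
    using local by auto
  have "\<not> C \<subseteq> W \<inter> E'"
    if "closedin (subtopology Y E') C" "openin (subtopology Y E') C" "C \<noteq> {}" for C
  proof -
    have "\<not> C \<inter> E \<subseteq> W"
      using no_clopen clopen_in_dense_subtopology[OF E' that] by blast
    then show ?thesis
      by blast
  qed
  moreover have "openin (subtopology Y E') (W \<inter> E')"
    using W(1) by (simp add: openin_subtopology_Int)
  ultimately show "\<exists>N V. openin (subtopology Y E') V \<and> x \<in> V \<and> V \<subseteq> N \<and>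
      N \<subseteq> topspace (subtopology Y E') \<and>
      (\<forall>C. closedin (subtopology Y E') C \<and> openin (subtopology Y E') C \<and> C \<noteq> {} \<longrightarrow> \<not> C \<subseteq> N)"
    using W(2) \<open>x \<in> topspace (subtopology Y E')\<close> openin_subset[OF W(1)]
    by (intro exI[of _ "W \<inter> E'"]) auto
qed

lemma cohesive_open_envelope:
  assumes "cohesive (subtopology Y E)" "E \<subseteq> topspace Y"
  obtains U where "openin Y U" "E \<subseteq> U"
    "\<And>E'. E \<subseteq> E' \<Longrightarrow> E' \<subseteq> U \<inter> Y closure_of E \<Longrightarrow> cohesive (subtopology Y E')"
proof -
  define U where "U = \<Union>{W. openin Y W \<and>
    (\<forall>C. closedin (subtopology Y E) C \<and> openin (subtopology Y E) C \<and> C \<noteq> {} \<longrightarrow> \<not> C \<subseteq> W)}"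
  have "openin Y U"
    unfolding U_def by (rule openin_Union) blast
  moreover have "E \<subseteq> U"
  proof
    fix x assume "x \<in> E"
    then have "x \<in> topspace (subtopology Y E)"
      using assms(2) by auto
    then obtain N V where V: "openin (subtopology Y E) V" "x \<in> V" "V \<subseteq> N"
      and N: "\<forall>C. closedin (subtopology Y E) C \<and> openin (subtopology Y E) C \<and> C \<noteq> {} \<longrightarrow> \<not> C \<subseteq> N"
      using assms(1) unfolding cohesive_def by (metis (no_types, lifting))
    obtain W where W: "openin Y W" "V = W \<inter> E"
      using V(1) unfolding openin_subtopology by blast
    have "\<not> C \<subseteq> W" if "closedin (subtopology Y E) C" "openin (subtopology Y E) C" "C \<noteq> {}" for C
      using N[rule_format, of C] that closedin_subset[OF that(1)] W(2) V(3) by auto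
    with W V(2) show "x \<in> U"
      unfolding U_def by blast
  qed
  moreover have "cohesive (subtopology Y E')" if "E \<subseteq> E'" "E' \<subseteq> U \<inter> Y closure_of E" for E'
  proof (rule cohesive_subtopology_if_dense)
    show "E \<subseteq> E'" "E' \<subseteq> Y closure_of E"
      using that by auto
    fix x assume "x \<in> E'"
    with that(2) have "x \<in> U"
      by blast
    then show "\<exists>W. openin Y W \<and> x \<in> W \<and>
        (\<forall>C. closedin (subtopology Y E) C \<and> openin (subtopology Y E) C \<and> C \<noteq> {} \<longrightarrow> \<not> C \<subseteq> W)"
      unfolding U_def by blast
  qed
  ultimately show thesis
    by (rule that)
qed

definition splits :: "'a topology \<Rightarrow> 'a set \<Rightarrow> 'a set \<Rightarrow> 'a set \<Rightarrow> bool" where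
  "splits Y G H S \<longleftrightarrow> openin Y G \<and> openin Y H \<and> S \<subseteq> G \<union> H \<and> S \<inter> G \<inter> H = {}"

lemma splits_imp_clopen:
  assumes "splits Y G H S"
  shows "closedin (subtopology Y S) (G \<inter> S)" "openin (subtopology Y S) (G \<inter> S)"
proof -
  have "topspace (subtopology Y S) - G \<inter> S = H \<inter> S"
    using assms openin_subset[of Y H] by (auto simp: splits_def)
  then show "closedin (subtopology Y S) (G \<inter> S)"
    using assms openin_subset[of Y G] unfolding closedin_def splits_def
    by (auto simp: openin_subtopology_Int)
  show "openin (subtopology Y S) (G \<inter> S)"
    using assms unfolding splits_def by (simp add: openin_subtopology_Int)
qed

lemma clopen_imp_splits:
  assumes "S \<subseteq> topspace Y" "closedin (subtopology Y S) C" "openin (subtopology Y S) C"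
  obtains G H where "splits Y G H S" "C = G \<inter> S"
proof -
  obtain G where G: "openin Y G" "C = G \<inter> S"
    using assms(3) unfolding openin_subtopology by blast
  have "openin (subtopology Y S) (S - C)"
    using assms(1,2) unfolding closedin_def by (simp add: Int_absorb1)
  then obtain H where H: "openin Y H" "S - C = H \<inter> S"
    unfolding openin_subtopology by blast
  have "splits Y G H S"
    unfolding splits_def using G H by blast
  with G(2) show thesis
    using that by blast
qed

lemma splits_extend_to_closure:
  assumes "splits Y G H S" "E \<subseteq> S" "S \<subseteq> Y closure_of E" "openin Y W" "E \<inter> W \<subseteq> G"
  shows "S \<inter> W \<subseteq> G"
proof
  fix y assume y: "y \<in> S \<inter> W"
  show "y \<in> G"
  proof (rule ccontr)
    assume "y \<notin> G"
    then have "y \<in> H \<inter> W"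
      using assms(1) y unfolding splits_def by blast
    moreover have "openin Y (H \<inter> W)"
      using assms(1,4) unfolding splits_def by blast
    moreover have "y \<in> Y closure_of E"
      using y assms(3) by blast
    ultimately obtain z where "z \<in> E" "z \<in> H \<inter> W"
      unfolding in_closure_of by blast
    then show False
      using assms(1,2,5) unfolding splits_def by blast
  qed
qed

lemma C_set_Inter_splits:
  assumes "S \<subseteq> topspace Y" "\<forall>P\<in>\<P>. splits Y (fst P) (snd P) S"
  shows "C_set (subtopology Y S) (S \<inter> \<Inter>(fst ` \<P>))"
  unfolding C_set_def
proof (intro exI conjI)
  show "\<forall>U\<in>(\<lambda>P. fst P \<inter> S) ` \<P>. closedin (subtopology Y S) U \<and> openin (subtopology Y S) U"
    using assms(2) splits_imp_clopen by blast
  show "S \<inter> \<Inter>(fst ` \<P>) = topspace (subtopology Y S) \<inter> \<Inter>((\<lambda>P. fst P \<inter> S) ` \<P>)"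
    using assms(1) by auto
qed

lemma C_set_imp_Inter_splits:
  assumes "second_countable Y" "S \<subseteq> topspace Y" "C_set (subtopology Y S) A"
  obtains \<P> where "countable \<P>" "\<forall>P\<in>\<P>. splits Y (fst P) (snd P) S" "A = S \<inter> \<Inter>(fst ` \<P>)"
proof -
  obtain \<U> where \<U>: "countable \<U>"
    "\<And>C. C \<in> \<U> \<Longrightarrow> closedin (subtopology Y S) C \<and> openin (subtopology Y S) C"
    and A: "A = topspace (subtopology Y S) \<inter> \<Inter>\<U>"
    using C_set_countable_Inter[OF second_countable_subtopology[OF assms(1)] assms(3)] by blast
  have "\<forall>C\<in>\<U>. \<exists>P. splits Y (fst P) (snd P) S \<and> C = fst P \<inter> S"
  proof
    fix C assume "C \<in> \<U>"
    then obtain G H where "splits Y G H S" "C = G \<inter> S"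
      using clopen_imp_splits[OF assms(2)] \<U>(2) by blast
    then show "\<exists>P. splits Y (fst P) (snd P) S \<and> C = fst P \<inter> S"
      by (intro exI[of _ "(G, H)"]) simp
  qed
  then have "\<exists>f. \<forall>C\<in>\<U>. splits Y (fst (f C)) (snd (f C)) S \<and> C = fst (f C) \<inter> S"
    by (rule bchoice)
  then obtain f where f: "\<forall>C\<in>\<U>. splits Y (fst (f C)) (snd (f C)) S \<and> C = fst (f C) \<inter> S"
    by blast
  show thesis
  proof (rule that[of "f ` \<U>"])
    show "countable (f ` \<U>)"
      using \<U>(1) by simp
    show "\<forall>P\<in>f ` \<U>. splits Y (fst P) (snd P) S"
      using f by simp
    show "A = S \<inter> \<Inter>(fst ` f ` \<U>)"
      unfolding A using f assms(2) by auto
  qed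
qed

lemma local_splitting_if_almost_zero_dimensional:
  assumes "second_countable Y" "E \<subseteq> topspace Y" "almost_zero_dimensional (subtopology Y E)"
    and base: "\<And>U x. openin Y U \<Longrightarrow> x \<in> U \<Longrightarrow> \<exists>B\<in>\<B>. x \<in> B \<and> B \<subseteq> U"
    and "openin Y U" "x \<in> E \<inter> U"
  obtains W \<P> where "W \<in> \<B>" "x \<in> W" "countable \<P>" "\<forall>P\<in>\<P>. splits Y (fst P) (snd P) E"
    "E \<inter> W \<subseteq> \<Inter>(fst ` \<P>)" "E \<inter> \<Inter>(fst ` \<P>) \<subseteq> U"
proof -
  have "openin (subtopology Y E) (U \<inter> E)"
    using assms(5) by (simp add: openin_subtopology_Int)
  moreover have "x \<in> U \<inter> E"
    using assms(6) by blast
  ultimately have "\<exists>A V. C_set (subtopology Y E) A \<and> openin (subtopology Y E) V \<and>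
      x \<in> V \<and> V \<subseteq> A \<and> A \<subseteq> U \<inter> E"
    using assms(3) unfolding almost_zero_dimensional_def by blast
  then obtain A V where A: "C_set (subtopology Y E) A" "A \<subseteq> U \<inter> E"
    and V: "openin (subtopology Y E) V" "x \<in> V" "V \<subseteq> A"
    by blast
  obtain \<P> where \<P>: "countable \<P>" "\<forall>P\<in>\<P>. splits Y (fst P) (snd P) E" "A = E \<inter> \<Inter>(fst ` \<P>)"
    using C_set_imp_Inter_splits[OF assms(1,2) A(1)] by blast
  obtain T where T: "openin Y T" "V = T \<inter> E"
    using V(1) unfolding openin_subtopology by blast
  then obtain W where W: "W \<in> \<B>" "x \<in> W" "W \<subseteq> T"
    using base V(2) by blast
  show thesis
  proof (rule that[OF W(1,2) \<P>(1,2)])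
    show "E \<inter> W \<subseteq> \<Inter>(fst ` \<P>)"
      using W(3) T(2) V(3) \<P>(3) by blast
    show "E \<inter> \<Inter>(fst ` \<P>) \<subseteq> U"
      using A(2) \<P>(3) by blast
  qed
qed

lemma almost_zero_dimensional_if_local_splittings:
  assumes "regular_space Y" "E \<subseteq> E'" "E' \<subseteq> Y closure_of E"
    and base: "\<And>U x. openin Y U \<Longrightarrow> x \<in> U \<Longrightarrow> \<exists>B\<in>\<B>. x \<in> B \<and> B \<subseteq> U"
    and local: "\<And>x B. x \<in> E' \<Longrightarrow> B \<in> \<B> \<Longrightarrow> x \<in> B \<Longrightarrow>
      \<exists>W \<P>. openin Y W \<and> x \<in> W \<and> (\<forall>P\<in>\<P>. splits Y (fst P) (snd P) E') \<and>
        E \<inter> W \<subseteq> \<Inter>(fst ` \<P>) \<and> E' \<inter> \<Inter>(fst ` \<P>) \<subseteq> Y closure_of B"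
  shows "almost_zero_dimensional (subtopology Y E')"
  unfolding almost_zero_dimensional_def
proof (intro allI impI, elim conjE)
  fix x U' assume "openin (subtopology Y E') U'" "x \<in> U'"
  then obtain U where U: "openin Y U" "U' = U \<inter> E'"
    unfolding openin_subtopology by blast
  have "x \<in> E'" "x \<in> U"
    using \<open>x \<in> U'\<close> U(2) by auto
  have "neighbourhood_base_of (closedin Y) Y"
    using assms(1) neighbourhood_base_of_closedin by auto
  then have "\<exists>V F. openin Y V \<and> closedin Y F \<and> x \<in> V \<and> V \<subseteq> F \<and> F \<subseteq> U"
    using U(1) \<open>x \<in> U\<close> unfolding neighbourhood_base_of by simp
  then obtain V F where VF: "openin Y V" "closedin Y F" "x \<in> V" "V \<subseteq> F" "F \<subseteq> U"
    by blast
  obtain B where B: "B \<in> \<B>" "x \<in> B" "B \<subseteq> V"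
    using base[OF VF(1,3)] by blast
  obtain W \<P> where W: "openin Y W" "x \<in> W"
    and \<P>: "\<forall>P\<in>\<P>. splits Y (fst P) (snd P) E'" "E \<inter> W \<subseteq> \<Inter>(fst ` \<P>)"
      "E' \<inter> \<Inter>(fst ` \<P>) \<subseteq> Y closure_of B"
    using local[OF \<open>x \<in> E'\<close> B(1,2)] by blast
  have "Y closure_of B \<subseteq> U"
    using closure_of_minimal[of B F Y] B(3) VF by blast
  have E'_sub: "E' \<subseteq> topspace Y"
    using assms(3) closure_of_subset_topspace by (rule order_trans)
  have "C_set (subtopology Y E') (E' \<inter> \<Inter>(fst ` \<P>))"
    using E'_sub \<P>(1) by (rule C_set_Inter_splits)
  moreover have "openin (subtopology Y E') (W \<inter> E')"
    using W(1) by (simp add: openin_subtopology_Int)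
  moreover have "W \<inter> E' \<subseteq> E' \<inter> \<Inter>(fst ` \<P>)"
  proof -
    have "E' \<inter> W \<subseteq> fst P" if "P \<in> \<P>" for P
    proof (rule splits_extend_to_closure[OF _ assms(2,3) W(1)])
      show "splits Y (fst P) (snd P) E'"
        using \<P>(1) that by blast
      show "E \<inter> W \<subseteq> fst P"
        using \<P>(2) that by blast
    qed
    then show ?thesis
      by blast
  qed
  ultimately show "\<exists>A V. C_set (subtopology Y E') A \<and> openin (subtopology Y E') V \<and>
      x \<in> V \<and> V \<subseteq> A \<and> A \<subseteq> U'"
    using W(2) \<open>x \<in> E'\<close> U(2) \<P>(3) \<open>Y closure_of B \<subseteq> U\<close>
    by (intro exI[of _ "E' \<inter> \<Inter>(fst ` \<P>)"] exI[of _ "W \<inter> E'"]) auto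
qed

lemma gdelta_in_Collect_Ball:
  assumes "countable A" "\<And>a. a \<in> A \<Longrightarrow> gdelta_in Y {y \<in> topspace Y. P a y}"
  shows "gdelta_in Y {y \<in> topspace Y. \<forall>a\<in>A. P a y}"
proof -
  have "gdelta_in Y (\<Inter>(insert (topspace Y) ((\<lambda>a. {y \<in> topspace Y. P a y}) ` A)))"
    by (rule gdelta_in_Inter) (use assms in auto)
  moreover have "\<Inter>(insert (topspace Y) ((\<lambda>a. {y \<in> topspace Y. P a y}) ` A)) =
      {y \<in> topspace Y. \<forall>a\<in>A. P a y}"
    by auto
  ultimately show ?thesis
    by simp
qed

text \<open>For q = (B, W) \<in> Q, the first components of the pairs in \<P> q cut out of E a C-set lying
between W and B; every point of E in a basic set B lies in such a W.\<close>

definition splitting_system ::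
    "'a topology \<Rightarrow> 'a set \<Rightarrow> 'a set set \<Rightarrow> ('a set \<times> 'a set) set \<Rightarrow>
      ('a set \<times> 'a set \<Rightarrow> ('a set \<times> 'a set) set) \<Rightarrow> bool" where
  "splitting_system Y E \<B> Q \<P> \<longleftrightarrow> countable Q \<and> Q \<subseteq> \<B> \<times> \<B> \<and>
     (\<forall>q\<in>Q. countable (\<P> q) \<and> (\<forall>P\<in>\<P> q. splits Y (fst P) (snd P) E) \<and>
        E \<inter> snd q \<subseteq> \<Inter>(fst ` \<P> q) \<and> E \<inter> \<Inter>(fst ` \<P> q) \<subseteq> fst q) \<and>
     (\<forall>B\<in>\<B>. \<forall>x\<in>E \<inter> B. \<exists>W. (B, W) \<in> Q \<and> x \<in> W)"

lemma splitting_systemD: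
  assumes "splitting_system Y E \<B> Q \<P>"
  shows "countable Q" "Q \<subseteq> \<B> \<times> \<B>"
    and "\<And>q. q \<in> Q \<Longrightarrow> countable (\<P> q)"
    and "\<And>q P. q \<in> Q \<Longrightarrow> P \<in> \<P> q \<Longrightarrow> splits Y (fst P) (snd P) E"
    and "\<And>q. q \<in> Q \<Longrightarrow> E \<inter> snd q \<subseteq> \<Inter>(fst ` \<P> q)"
    and "\<And>q. q \<in> Q \<Longrightarrow> E \<inter> \<Inter>(fst ` \<P> q) \<subseteq> fst q"
    and "\<And>B x. B \<in> \<B> \<Longrightarrow> x \<in> E \<inter> B \<Longrightarrow> \<exists>W. (B, W) \<in> Q \<and> x \<in> W"
  using assms unfolding splitting_system_def by auto

lemma splitting_system_if_almost_zero_dimensional: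
  assumes "second_countable Y" "E \<subseteq> topspace Y" "almost_zero_dimensional (subtopology Y E)"
    and \<B>: "countable \<B>" "\<And>B. B \<in> \<B> \<Longrightarrow> openin Y B"
    and base: "\<And>U x. openin Y U \<Longrightarrow> x \<in> U \<Longrightarrow> \<exists>B\<in>\<B>. x \<in> B \<and> B \<subseteq> U"
  obtains Q \<P> where "splitting_system Y E \<B> Q \<P>"
proof -
  define witness where "witness q \<P> \<longleftrightarrow> countable \<P> \<and> (\<forall>P\<in>\<P>. splits Y (fst P) (snd P) E) \<and>
    E \<inter> snd q \<subseteq> \<Inter>(fst ` \<P>) \<and> E \<inter> \<Inter>(fst ` \<P>) \<subseteq> fst q" for q \<P>
  define Q where "Q = {q \<in> \<B> \<times> \<B>. \<exists>\<P>. witness q \<P>}"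
  have "\<forall>q\<in>Q. \<exists>\<P>. witness q \<P>"
    unfolding Q_def by blast
  then have "\<exists>\<P>. \<forall>q\<in>Q. witness q (\<P> q)"
    by (rule bchoice)
  then obtain \<P> where "\<forall>q\<in>Q. witness q (\<P> q)"
    by blast
  moreover have "Q \<subseteq> \<B> \<times> \<B>"
    unfolding Q_def by blast
  moreover have "countable Q"
    using calculation(2) by (rule countable_subset) (use \<B>(1) in simp)
  moreover have "\<exists>W. (B, W) \<in> Q \<and> x \<in> W" if B: "B \<in> \<B>" and x: "x \<in> E \<inter> B" for B x
  proof -
    obtain W \<P>' where W: "W \<in> \<B>" "x \<in> W" and "countable \<P>'" "\<forall>P\<in>\<P>'. splits Y (fst P) (snd P) E"
      "E \<inter> W \<subseteq> \<Inter>(fst ` \<P>')" "E \<inter> \<Inter>(fst ` \<P>') \<subseteq> B"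
      by (rule local_splitting_if_almost_zero_dimensional[OF assms(1-3) base \<B>(2)[OF B] x])
    then have "witness (B, W) \<P>'"
      unfolding witness_def by simp
    then have "(B, W) \<in> Q"
      unfolding Q_def using B W(1) by blast
    with W(2) show ?thesis
      by blast
  qed
  ultimately have "splitting_system Y E \<B> Q \<P>"
    unfolding splitting_system_def witness_def by blast
  then show thesis
    by (rule that)
qed

definition splitting_envelope ::
    "'a topology \<Rightarrow> 'a set set \<Rightarrow> ('a set \<times> 'a set) set \<Rightarrow>
      ('a set \<times> 'a set \<Rightarrow> ('a set \<times> 'a set) set) \<Rightarrow> 'a set" where
  "splitting_envelope Y \<B> Q \<P> = {y \<in> topspace Y.
     (\<forall>q\<in>Q. \<forall>P\<in>\<P> q. y \<in> fst P \<longleftrightarrow> y \<notin> snd P) \<and>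
     (\<forall>q\<in>Q. (\<forall>P\<in>\<P> q. y \<notin> snd P) \<longrightarrow> y \<in> Y closure_of (fst q)) \<and>
     (\<forall>B\<in>\<B>. y \<in> B \<longrightarrow> (\<exists>W. (B, W) \<in> Q \<and> y \<in> W))}"

lemma gdelta_in_splitting_envelope:
  assumes "metrizable_space Y" "countable \<B>" "\<And>B. B \<in> \<B> \<Longrightarrow> openin Y B"
    and "splitting_system Y E \<B> Q \<P>"
  shows "gdelta_in Y (splitting_envelope Y \<B> Q \<P>)"
proof -
  note Q = splitting_systemD(1-4)[OF assms(4)]
  have split: "gdelta_in Y {y \<in> topspace Y. \<forall>q\<in>Q. \<forall>P\<in>\<P> q. y \<in> fst P \<longleftrightarrow> y \<notin> snd P}"
  proof (intro gdelta_in_Collect_Ball)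
    fix q P assume "q \<in> Q" "P \<in> \<P> q"
    then have opens: "openin Y (fst P)" "openin Y (snd P)"
      using Q(4) unfolding splits_def by blast+
    then have "{y \<in> topspace Y. y \<in> fst P \<longleftrightarrow> y \<notin> snd P} = (fst P \<union> snd P) - (fst P \<inter> snd P)"
      by (auto dest: openin_subset)
    moreover have "gdelta_in Y ((fst P \<union> snd P) - (fst P \<inter> snd P))"
      using assms(1) opens
      by (intro gdelta_in_diff open_imp_gdelta_in open_imp_fsigma_in openin_Un openin_Int)
    ultimately show "gdelta_in Y {y \<in> topspace Y. y \<in> fst P \<longleftrightarrow> y \<notin> snd P}"
      by simp
  qed (use Q(1,3) in auto)
  have closure: "gdelta_in Y
      {y \<in> topspace Y. \<forall>q\<in>Q. (\<forall>P\<in>\<P> q. y \<notin> snd P) \<longrightarrow> y \<in> Y closure_of (fst q)}"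
  proof (intro gdelta_in_Collect_Ball)
    fix q assume "q \<in> Q"
    then have "openin Y (\<Union>(snd ` \<P> q))"
      using Q(4)[OF \<open>q \<in> Q\<close>] unfolding splits_def by (intro openin_Union) auto
    moreover have "{y \<in> topspace Y. (\<forall>P\<in>\<P> q. y \<notin> snd P) \<longrightarrow> y \<in> Y closure_of (fst q)} =
        \<Union>(snd ` \<P> q) \<union> Y closure_of (fst q)"
      using openin_subset[OF calculation] closure_of_subset_topspace[of Y "fst q"] by auto
    ultimately show "gdelta_in Y
        {y \<in> topspace Y. (\<forall>P\<in>\<P> q. y \<notin> snd P) \<longrightarrow> y \<in> Y closure_of (fst q)}"
      using assms(1) by (simp add: gdelta_in_Un open_imp_gdelta_in closed_imp_gdelta_in)
  qed (rule Q(1))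
  have cover: "gdelta_in Y {y \<in> topspace Y. \<forall>B\<in>\<B>. y \<in> B \<longrightarrow> (\<exists>W. (B, W) \<in> Q \<and> y \<in> W)}"
  proof (intro gdelta_in_Collect_Ball)
    fix B assume "B \<in> \<B>"
    have "openin Y (\<Union>{W. (B, W) \<in> Q})"
      using Q(2) assms(3) by (intro openin_Union) auto
    moreover have "{y \<in> topspace Y. y \<in> B \<longrightarrow> (\<exists>W. (B, W) \<in> Q \<and> y \<in> W)} =
        (topspace Y - B) \<union> \<Union>{W. (B, W) \<in> Q}"
      using openin_subset[OF calculation] by auto
    moreover have "gdelta_in Y (topspace Y - B)"
      using assms(1,3) \<open>B \<in> \<B>\<close> by (intro closed_imp_gdelta_in) auto
    ultimately show "gdelta_in Y {y \<in> topspace Y. y \<in> B \<longrightarrow> (\<exists>W. (B, W) \<in> Q \<and> y \<in> W)}"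
      by (simp add: gdelta_in_Un open_imp_gdelta_in)
  qed (rule assms(2))
  have "splitting_envelope Y \<B> Q \<P> =
      {y \<in> topspace Y. \<forall>q\<in>Q. \<forall>P\<in>\<P> q. y \<in> fst P \<longleftrightarrow> y \<notin> snd P} \<inter>
      {y \<in> topspace Y. \<forall>q\<in>Q. (\<forall>P\<in>\<P> q. y \<notin> snd P) \<longrightarrow> y \<in> Y closure_of (fst q)} \<inter>
      {y \<in> topspace Y. \<forall>B\<in>\<B>. y \<in> B \<longrightarrow> (\<exists>W. (B, W) \<in> Q \<and> y \<in> W)}"
    unfolding splitting_envelope_def by auto
  with split closure cover show ?thesis
    by (simp add: gdelta_in_Int)
qed

lemma subset_splitting_envelope:
  assumes "E \<subseteq> topspace Y" "\<And>B. B \<in> \<B> \<Longrightarrow> openin Y B" "splitting_system Y E \<B> Q \<P>"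
  shows "E \<subseteq> splitting_envelope Y \<B> Q \<P>"
proof
  note Q = splitting_systemD[OF assms(3)]
  fix y assume y: "y \<in> E"
  show "y \<in> splitting_envelope Y \<B> Q \<P>"
    unfolding splitting_envelope_def
  proof (intro CollectI conjI ballI impI)
    show "y \<in> topspace Y"
      using y assms(1) by blast
    show "y \<in> fst P \<longleftrightarrow> y \<notin> snd P" if "q \<in> Q" "P \<in> \<P> q" for q P
      using Q(4)[OF that] y unfolding splits_def by auto
    show "y \<in> Y closure_of (fst q)" if q: "q \<in> Q" "\<forall>P\<in>\<P> q. y \<notin> snd P" for q
    proof -
      have "y \<in> fst P" if "P \<in> \<P> q" for P
        using Q(4)[OF q(1) that] q(2) that y unfolding splits_def by auto
      then have "y \<in> fst q"
        using Q(6)[OF q(1)] y by blast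
      moreover have "openin Y (fst q)"
        using q(1) Q(2) assms(2) by auto
      then have "fst q \<subseteq> Y closure_of (fst q)"
        by (simp add: closure_of_subset openin_subset)
      ultimately show ?thesis
        by blast
    qed
    show "\<exists>W. (B, W) \<in> Q \<and> y \<in> W" if "B \<in> \<B>" "y \<in> B" for B
      using Q(7)[OF that(1)] that(2) y by blast
  qed
qed

lemma almost_zero_dimensional_in_splitting_envelope:
  assumes "regular_space Y" "\<And>B. B \<in> \<B> \<Longrightarrow> openin Y B"
    and base: "\<And>U x. openin Y U \<Longrightarrow> x \<in> U \<Longrightarrow> \<exists>B\<in>\<B>. x \<in> B \<and> B \<subseteq> U"
    and "splitting_system Y E \<B> Q \<P>"
    and E': "E \<subseteq> E'" "E' \<subseteq> splitting_envelope Y \<B> Q \<P> \<inter> Y closure_of E"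
  shows "almost_zero_dimensional (subtopology Y E')"
proof (rule almost_zero_dimensional_if_local_splittings[OF assms(1) E'(1) _ base])
  note Q = splitting_systemD[OF assms(4)]
  have envelope: "y \<in> topspace Y"
      "\<And>q P. q \<in> Q \<Longrightarrow> P \<in> \<P> q \<Longrightarrow> y \<in> fst P \<longleftrightarrow> y \<notin> snd P"
      "\<And>q. q \<in> Q \<Longrightarrow> \<forall>P\<in>\<P> q. y \<notin> snd P \<Longrightarrow> y \<in> Y closure_of (fst q)"
      "\<And>B. B \<in> \<B> \<Longrightarrow> y \<in> B \<Longrightarrow> \<exists>W. (B, W) \<in> Q \<and> y \<in> W"
    if "y \<in> E'" for y
    using E'(2) that unfolding splitting_envelope_def by blast+
  show "E' \<subseteq> Y closure_of E"
    using E'(2) by blast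
  fix x B assume x: "x \<in> E'" and B: "B \<in> \<B>" "x \<in> B"
  then obtain W where W: "(B, W) \<in> Q" "x \<in> W"
    using envelope(4) by blast
  show "\<exists>W \<P>'. openin Y W \<and> x \<in> W \<and> (\<forall>P\<in>\<P>'. splits Y (fst P) (snd P) E') \<and>
      E \<inter> W \<subseteq> \<Inter>(fst ` \<P>') \<and> E' \<inter> \<Inter>(fst ` \<P>') \<subseteq> Y closure_of B"
  proof (intro exI conjI)
    show "openin Y W"
      using W(1) Q(2) assms(2) by blast
    show "\<forall>P\<in>\<P> (B, W). splits Y (fst P) (snd P) E'"
      using Q(4)[OF W(1)] envelope(2)[OF _ W(1)] unfolding splits_def by blast
    show "E \<inter> W \<subseteq> \<Inter>(fst ` \<P> (B, W))"
      using Q(5)[OF W(1)] by simp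
    show "E' \<inter> \<Inter>(fst ` \<P> (B, W)) \<subseteq> Y closure_of B"
    proof
      fix y assume "y \<in> E' \<inter> \<Inter>(fst ` \<P> (B, W))"
      then have "y \<in> E'" "\<forall>P\<in>\<P> (B, W). y \<notin> snd P"
        using envelope(2)[OF _ W(1)] by auto
      then show "y \<in> Y closure_of B"
        using envelope(3)[OF _ W(1)] by simp
    qed
  qed (rule W(2))
qed

lemma almost_zero_dimensional_gdelta_envelope:
  assumes "metrizable_space Y" "second_countable Y" "E \<subseteq> topspace Y"
    and "almost_zero_dimensional (subtopology Y E)"
  obtains S where "gdelta_in Y S" "E \<subseteq> S"
    "\<And>E'. E \<subseteq> E' \<Longrightarrow> E' \<subseteq> S \<inter> Y closure_of E \<Longrightarrow> almost_zero_dimensional (subtopology Y E')"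
proof -
  obtain \<B> where "countable \<B>" "\<forall>B\<in>\<B>. openin Y B"
    and "\<forall>U x. openin Y U \<and> x \<in> U \<longrightarrow> (\<exists>B\<in>\<B>. x \<in> B \<and> B \<subseteq> U)"
    using assms(2) unfolding second_countable_def by blast
  then have \<B>: "countable \<B>" "\<And>B. B \<in> \<B> \<Longrightarrow> openin Y B"
    and base: "\<And>U x. openin Y U \<Longrightarrow> x \<in> U \<Longrightarrow> \<exists>B\<in>\<B>. x \<in> B \<and> B \<subseteq> U"
    by auto
  obtain Q \<P> where Q: "splitting_system Y E \<B> Q \<P>"
    using splitting_system_if_almost_zero_dimensional[OF assms(2-4) \<B> base] by blast
  show thesis
  proof (rule that)
    show "gdelta_in Y (splitting_envelope Y \<B> Q \<P>)"
      by (rule gdelta_in_splitting_envelope[OF assms(1) \<B> Q])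
    show "E \<subseteq> splitting_envelope Y \<B> Q \<P>"
      by (rule subset_splitting_envelope[OF assms(3) \<B>(2) Q])
    show "almost_zero_dimensional (subtopology Y E')"
      if "E \<subseteq> E'" "E' \<subseteq> splitting_envelope Y \<B> Q \<P> \<inter> Y closure_of E" for E'
      using metrizable_imp_regular_space[OF assms(1)] \<B>(2) base Q that
      by (rule almost_zero_dimensional_in_splitting_envelope)
  qed
qed

theorem corollary3p2:
  fixes Y :: "'a topology" and E :: "'a set"
  assumes "completely_metrizable_space Y" and "separable_space Y"
    and "E \<subseteq> topspace Y" and "E \<noteq> {}"
    and "cohesive (subtopology Y E)"
    and "almost_zero_dimensional (subtopology Y E)"
  shows "\<exists>E'. E \<subseteq> E' \<and> E' \<subseteq> topspace Y \<and>
           completely_metrizable_space (subtopology Y E') \<and>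
           separable_space (subtopology Y E') \<and>
           cohesive (subtopology Y E') \<and>
           almost_zero_dimensional (subtopology Y E')"
proof -
  have metrizable: "metrizable_space Y"
    using assms(1) by (rule completely_metrizable_imp_metrizable_space)
  have second_countable: "second_countable Y"
    using metrizable assms(2) by (rule separable_metrizable_imp_second_countable)
  obtain U where U: "openin Y U" "E \<subseteq> U"
    and cohesive: "\<And>E'. E \<subseteq> E' \<Longrightarrow> E' \<subseteq> U \<inter> Y closure_of E \<Longrightarrow> cohesive (subtopology Y E')"
    using cohesive_open_envelope[OF assms(5,3)] by blast
  obtain S where S: "gdelta_in Y S" "E \<subseteq> S"
    and azd: "\<And>E'. E \<subseteq> E' \<Longrightarrow> E' \<subseteq> S \<inter> Y closure_of E \<Longrightarrow>
      almost_zero_dimensional (subtopology Y E')"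
    using almost_zero_dimensional_gdelta_envelope[OF metrizable second_countable assms(3,6)] by blast
  define E' where "E' = U \<inter> S \<inter> Y closure_of E"
  have "gdelta_in Y (Y closure_of E)"
    using metrizable by (simp add: closed_imp_gdelta_in)
  then have "gdelta_in Y E'"
    unfolding E'_def using U(1) S(1) by (simp add: gdelta_in_Int open_imp_gdelta_in)
  have "E \<subseteq> E'"
    unfolding E'_def using U(2) S(2) closure_of_subset[OF assms(3)] by (intro Int_greatest)
  show ?thesis
  proof (intro exI conjI)
    show "E \<subseteq> E'"
      by fact
    show "E' \<subseteq> topspace Y"
      unfolding E'_def using closure_of_subset_topspace by (rule le_infI2)
    show "completely_metrizable_space (subtopology Y E')"
      using assms(1) \<open>gdelta_in Y E'\<close> by (rule completely_metrizable_space_gdelta_in)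
    show "separable_space (subtopology Y E')"
      using second_countable by (intro second_countable_imp_separable_space second_countable_subtopology)
    show "cohesive (subtopology Y E')"
      using \<open>E \<subseteq> E'\<close> by (rule cohesive) (auto simp: E'_def)
    show "almost_zero_dimensional (subtopology Y E')"
      using \<open>E \<subseteq> E'\<close> by (rule azd) (auto simp: E'_def)
  qed
qed

end
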